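(* Let $2 \le m \le n$ and $1 \le h \le k \le m$. Let $P$ be a nonzero orthogonal projection on $\mathcal{H}_n\otimes\mathcal{H}_m$. Then \[ \|P\|_{S(k)} \ge \Big(1 - \frac{k-h}{m-1}\Big)\|P\|_{S(h)} + \frac{k-h}{m-1}. \]
   Context: $\mathcal{H}_d = \mathbb{C}^d$ and $m\le n$. $SR$ denotes Schmidt rank, i.e. the number of nonzero singular values of the coefficient matrix of a vector in $\mathcal{H}_n\otimes\mathcal{H}_m$. For $1\le k\le m$, \[ \|X\|_{S(k)} := \sup\{|\langle w|X|v\rangle| : |v\rangle,|w\rangle \text{ unit vectors}, SR(|v\rangle),SR(|w\rangle)\le k\}. \] *)

theory Defs
  imports "Jordan_Normal_Form.DL_Rank" "Jordan_Normal_Form.Conjugate"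
begin

text \<open>H_n (x) H_m is identified with C^(n*m) via the standard Kronecker basis:
  the basis vector e_i (x) f_j (i<n, j<m) has index i*m + j.\<close>

definition coeff_mat :: "nat \<Rightarrow> nat \<Rightarrow> complex vec \<Rightarrow> complex mat" where
  "coeff_mat n m v = mat n m (\<lambda>(i,j). v $ (i*m + j))"

text \<open>Schmidt rank = number of nonzero singular values = rank of the coefficient matrix.\<close>
definition schmidt_rank :: "nat \<Rightarrow> nat \<Rightarrow> complex vec \<Rightarrow> nat" where
  "schmidt_rank n m v = vec_space.rank n (coeff_mat n m v)"

definition unit_vec_c :: "nat \<Rightarrow> complex vec \<Rightarrow> bool" where
  "unit_vec_c d v \<longleftrightarrow> v \<in> carrier_vec d \<and> (\<Sum>i<d. (cmod (v $ i))\<^sup>2) = 1"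

definition braket :: "complex vec \<Rightarrow> complex mat \<Rightarrow> complex vec \<Rightarrow> complex" where
  "braket w X v = (\<Sum>i<dim_vec w. cnj (w $ i) * (X *\<^sub>v v) $ i)"

definition S_norm :: "nat \<Rightarrow> nat \<Rightarrow> nat \<Rightarrow> complex mat \<Rightarrow> real" where
  "S_norm n m k X = Sup {cmod (braket w X v) | v w.
      unit_vec_c (n*m) v \<and> unit_vec_c (n*m) w \<and>
      schmidt_rank n m v \<le> k \<and> schmidt_rank n m w \<le> k}"

definition orth_projection :: "nat \<Rightarrow> complex mat \<Rightarrow> bool" where
  "orth_projection d P \<longleftrightarrow> P \<in> carrier_mat d d \<and> P * P = P \<and>
      (\<forall>i<d. \<forall>j<d. P $$ (i,j) = cnj (P $$ (j,i)))"

end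

theory Submission
  imports Defs
begin

text \<open>For an orthogonal projection \<open>P\<close> the supremum defining the \<open>S(h)\<close>-norm is approached
  by diagonal values \<open>\<langle>y|P|y\<rangle> = \<parallel>Py\<parallel>\<^sup>2\<close> with \<open>SR(y) \<le> h\<close>, and the normalisation \<open>x\<close> of \<open>Py\<close> is a
  unit vector in the range of \<open>P\<close> with \<open>|\<langle>x|y\<rangle>|\<^sup>2 \<ge> \<parallel>Py\<parallel>\<^sup>2\<close>. Write \<open>y = \<Sum>\<^sub>t y\<^sub>t \<otimes> w\<^sub>t\<close> with at
  most \<open>h\<close> orthonormal \<open>w\<^sub>t \<in> \<complex>\<^sup>m\<close>; the component of \<open>x\<close> in \<open>\<complex>\<^sup>n \<otimes> span w\<close> has squared norm at
  least \<open>|\<langle>x|y\<rangle>|\<^sup>2\<close>. Enlarge \<open>w\<close> greedily by \<open>k - h\<close> further orthonormal vectors: averaging over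
  the residuals of the standard basis shows that each new vector captures at least the fraction
  \<open>1/(m - s)\<close> of the mass of \<open>x\<close> still missing, \<open>s \<ge> 1\<close> being the current size of the family. The
  normalised component \<open>z\<close> of \<open>x\<close> in \<open>\<complex>\<^sup>n \<otimes> span w\<close> then has Schmidt rank at most \<open>k\<close> and
  \<open>\<langle>z|P|z\<rangle> \<ge> |\<langle>x|z\<rangle>|\<^sup>2 \<ge> (1 - \<tau>) |\<langle>x|y\<rangle>|\<^sup>2 + \<tau>\<close> with \<open>\<tau> = (k - h)/(m - 1)\<close>.\<close>

subsection \<open>Inner products of functions on an index set\<close>

definition inner_on :: "'i set \<Rightarrow> ('i \<Rightarrow> complex) \<Rightarrow> ('i \<Rightarrow> complex) \<Rightarrow> complex" where
  "inner_on A a b = (\<Sum>i\<in>A. cnj (a i) * b i)"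

lemma cnj_inner_on: "cnj (inner_on A a b) = inner_on A b a"
  unfolding inner_on_def by (simp add: mult.commute)

lemma inner_on_self: "inner_on A a a = complex_of_real (\<Sum>i\<in>A. (cmod (a i))\<^sup>2)"
  unfolding inner_on_def of_real_sum by (intro sum.cong refl) (metis complex_norm_square mult.commute)

lemma Re_inner_on_self: "Re (inner_on A a a) = (\<Sum>i\<in>A. (cmod (a i))\<^sup>2)"
  by (simp add: inner_on_self)

lemma Re_cnj_mult_self: "Re (cnj z * z) = (cmod z)\<^sup>2"
  by (simp add: cmod_power2 power2_eq_square[symmetric])

lemma inner_on_self_nonneg: "Re (inner_on A a a) \<ge> 0"
  by (simp add: Re_inner_on_self sum_nonneg)

lemma inner_on_self_real: "inner_on A a a = complex_of_real (Re (inner_on A a a))"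
  by (simp add: inner_on_self)

lemma inner_on_self_eq_0_iff:
  "finite A \<Longrightarrow> Re (inner_on A a a) = 0 \<longleftrightarrow> (\<forall>i\<in>A. a i = 0)"
  by (simp add: Re_inner_on_self sum_nonneg_eq_0_iff)

lemma inner_on_cong:
  "(\<And>i. i \<in> A \<Longrightarrow> a i = a' i) \<Longrightarrow> (\<And>i. i \<in> A \<Longrightarrow> b i = b' i) \<Longrightarrow> inner_on A a b = inner_on A a' b'"
  unfolding inner_on_def by simp

lemma inner_on_sum_right: "inner_on A a (\<lambda>i. \<Sum>t\<in>T. f t * g t i) = (\<Sum>t\<in>T. f t * inner_on A a (g t))"
  unfolding inner_on_def
  by (simp add: sum_distrib_left sum_distrib_right sum.swap[of _ A] mult.assoc mult.left_commute)

lemma inner_on_sum_left: "inner_on A (\<lambda>i. \<Sum>t\<in>T. f t * g t i) b = (\<Sum>t\<in>T. cnj (f t) * inner_on A (g t) b)"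
  unfolding inner_on_def
  by (simp add: sum_distrib_left sum_distrib_right sum.swap[of _ A] mult.assoc mult.left_commute cnj_sum)

lemma inner_on_diff_right: "inner_on A a (\<lambda>i. b i - c i) = inner_on A a b - inner_on A a c"
  unfolding inner_on_def by (simp add: right_diff_distrib sum_subtractf)

lemma inner_on_diff_left: "inner_on A (\<lambda>i. b i - c i) a = inner_on A b a - inner_on A c a"
  unfolding inner_on_def by (simp add: left_diff_distrib sum_subtractf)

lemma inner_on_scale_right: "inner_on A a (\<lambda>i. c * b i) = c * inner_on A a b"
  unfolding inner_on_def by (simp add: sum_distrib_left mult.left_commute)

lemma inner_on_scale_left: "inner_on A (\<lambda>i. c * b i) a = cnj c * inner_on A b a"
  unfolding inner_on_def by (simp add: sum_distrib_left mult.assoc)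

definition normalize_on :: "'i set \<Rightarrow> ('i \<Rightarrow> complex) \<Rightarrow> 'i \<Rightarrow> complex" where
  "normalize_on A d = (\<lambda>i. complex_of_real (1 / sqrt (Re (inner_on A d d))) * d i)"

lemma inner_on_normalize_on_self:
  assumes "Re (inner_on A d d) > 0"
  shows "inner_on A (normalize_on A d) (normalize_on A d) = 1"
proof -
  let ?D = "Re (inner_on A d d)"
  have "inner_on A (normalize_on A d) (normalize_on A d)
      = complex_of_real (1 / sqrt ?D) * complex_of_real (1 / sqrt ?D) * inner_on A d d"
    unfolding normalize_on_def inner_on_scale_left inner_on_scale_right by simp
  also have "\<dots> = complex_of_real (1 / sqrt ?D) * complex_of_real (1 / sqrt ?D) * complex_of_real ?D"
    by (metis inner_on_self_real)
  also have "\<dots> = complex_of_real (1 / sqrt ?D * (1 / sqrt ?D) * ?D)"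
    by (simp only: of_real_mult)
  also have "1 / sqrt ?D * (1 / sqrt ?D) * ?D = 1"
    using assms by (simp add: field_simps)
  finally show ?thesis by simp
qed

lemma normalize_on_scale:
  assumes "Re (inner_on A d d) > 0"
  shows "d i = complex_of_real (sqrt (Re (inner_on A d d))) * normalize_on A d i"
  using assms unfolding normalize_on_def
  by (simp add: mult.assoc[symmetric] of_real_mult[symmetric] del: of_real_mult)

lemma inner_on_normalize_on_right_eq_0:
  "inner_on A a d = 0 \<Longrightarrow> inner_on A a (normalize_on A d) = 0"
  unfolding normalize_on_def inner_on_scale_right by simp

subsection \<open>Orthonormal families\<close>

definition orthonormal_on :: "'i set \<Rightarrow> nat \<Rightarrow> (nat \<Rightarrow> 'i \<Rightarrow> complex) \<Rightarrow> bool" where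
  "orthonormal_on A s w \<longleftrightarrow>
     (\<forall>t<s. \<forall>t'<s. inner_on A (w t) (w t') = (if t = t' then 1 else 0))"

definition residual :: "'i set \<Rightarrow> nat \<Rightarrow> (nat \<Rightarrow> 'i \<Rightarrow> complex) \<Rightarrow> ('i \<Rightarrow> complex) \<Rightarrow> 'i \<Rightarrow> complex" where
  "residual A s w a = (\<lambda>i. a i - (\<Sum>t<s. inner_on A (w t) a * w t i))"

lemma inner_on_orthonormal_expansion:
  assumes "orthonormal_on A s w" "t < s"
  shows "inner_on A (w t) (\<lambda>i. \<Sum>t'<s. y t' * w t' i) = y t"
proof -
  have "inner_on A (w t) (\<lambda>i. \<Sum>t'<s. y t' * w t' i) = (\<Sum>t'<s. y t' * (if t = t' then 1 else 0))"
    unfolding inner_on_sum_right using assms unfolding orthonormal_on_def by (intro sum.cong) auto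
  then show ?thesis using assms(2) by (simp add: if_distrib[of "\<lambda>x. _ * x"] cong: if_cong)
qed

lemma inner_on_orthonormal_expansion_self:
  assumes "orthonormal_on A s w"
  shows "inner_on A (\<lambda>i. \<Sum>t<s. y t * w t i) (\<lambda>i. \<Sum>t<s. y t * w t i) = (\<Sum>t<s. cnj (y t) * y t)"
  unfolding inner_on_sum_left using inner_on_orthonormal_expansion[OF assms] by simp

lemma inner_on_residual_eq_0:
  assumes "orthonormal_on A s w" "t < s"
  shows "inner_on A (w t) (residual A s w a) = 0"
  unfolding residual_def inner_on_diff_right inner_on_orthonormal_expansion[OF assms] by simp

lemma Re_inner_on_residual_self:
  assumes "orthonormal_on A s w"
  shows "Re (inner_on A (residual A s w a) (residual A s w a))
       = Re (inner_on A a a) - (\<Sum>t<s. (cmod (inner_on A (w t) a))\<^sup>2)"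
proof -
  let ?r = "residual A s w a"
  have r0: "inner_on A ?r (w t) = 0" if "t < s" for t
    using inner_on_residual_eq_0[OF assms that] cnj_inner_on[of A "w t" ?r] by simp
  have "inner_on A ?r ?r = inner_on A ?r a"
    by (subst (2) residual_def) (simp add: inner_on_diff_right inner_on_sum_right r0)
  also have "\<dots> = inner_on A a a - (\<Sum>t<s. cnj (inner_on A (w t) a) * inner_on A (w t) a)"
    by (subst residual_def) (simp add: inner_on_diff_left inner_on_sum_left)
  finally have "inner_on A ?r ?r
      = inner_on A a a - (\<Sum>t<s. cnj (inner_on A (w t) a) * inner_on A (w t) a)" .
  then show ?thesis by (simp only: minus_complex.sel Re_sum Re_cnj_mult_self)
qed

lemma bessel_inequality:
  assumes "orthonormal_on A s w"
  shows "(\<Sum>t<s. (cmod (inner_on A (w t) a))\<^sup>2) \<le> Re (inner_on A a a)"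
  using Re_inner_on_residual_self[OF assms, of a] inner_on_self_nonneg[of A "residual A s w a"]
  by linarith

lemma orthonormal_on_extend:
  assumes "orthonormal_on A s w" "\<forall>t<s. inner_on A (w t) v = 0" "inner_on A v v = 1"
  shows "orthonormal_on A (Suc s) (w(s := v))"
  unfolding orthonormal_on_def
proof (intro allI impI)
  fix t t' assume t: "t < Suc s" and t': "t' < Suc s"
  have "inner_on A v (w t) = 0" if "t < s" for t
    using assms(2) that cnj_inner_on[of A "w t" v] by simp
  then show "inner_on A ((w(s := v)) t) ((w(s := v)) t') = (if t = t' then 1 else 0)"
    using t t' assms unfolding orthonormal_on_def
    by (cases "t = s"; cases "t' = s") (auto simp: less_Suc_eq)
qed

lemma orthonormal_on_normalized_residual:
  assumes "orthonormal_on A s w" "Re (inner_on A (residual A s w a) (residual A s w a)) > 0"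
  shows "orthonormal_on A (Suc s) (w(s := normalize_on A (residual A s w a)))"
  using assms by (intro orthonormal_on_extend inner_on_normalize_on_self allI impI
      inner_on_normalize_on_right_eq_0 inner_on_residual_eq_0)

lemma cauchy_schwarz_inner_on:
  assumes "finite A"
  shows "(cmod (inner_on A a b))\<^sup>2 \<le> Re (inner_on A a a) * Re (inner_on A b b)"
proof (cases "Re (inner_on A b b) = 0")
  case True
  then have "inner_on A a b = 0"
    using inner_on_self_eq_0_iff[OF assms] unfolding inner_on_def by simp
  then show ?thesis using inner_on_self_nonneg[of A a] inner_on_self_nonneg[of A b] by simp
next
  case False
  define B where "B = Re (inner_on A b b)"
  have B: "B > 0" using False inner_on_self_nonneg[of A b] unfolding B_def by linarith
  have "orthonormal_on A 1 (\<lambda>_. normalize_on A b)"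
    using inner_on_normalize_on_self[of A b] B unfolding orthonormal_on_def B_def by simp
  from bessel_inequality[OF this, of a]
  have "(cmod (inner_on A (normalize_on A b) a))\<^sup>2 \<le> Re (inner_on A a a)" by simp
  moreover have "cmod (inner_on A b a) = cmod (inner_on A a b)"
    by (metis cnj_inner_on complex_mod_cnj)
  then have "(cmod (inner_on A (normalize_on A b) a))\<^sup>2 = (cmod (inner_on A a b))\<^sup>2 / B"
    using B unfolding normalize_on_def inner_on_scale_left B_def[symmetric]
    by (simp add: norm_divide power_divide)
  ultimately show ?thesis using B unfolding B_def[symmetric] by (simp add: field_simps)
qed

lemma orthonormal_spanning_family:
  fixes \<alpha> :: "nat \<Rightarrow> 'i \<Rightarrow> complex"
  assumes "finite A"
  shows "\<exists>s w \<gamma>. s \<le> r \<and> orthonormal_on A s w \<and> (\<forall>l<r. \<forall>i\<in>A. \<alpha> l i = (\<Sum>t<s. \<gamma> l t * w t i))"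
proof (induction r)
  case 0
  show ?case by (rule exI[of _ 0]) (auto simp: orthonormal_on_def)
next
  case (Suc r)
  then obtain s w \<gamma> where s: "s \<le> r" and o: "orthonormal_on A s w"
    and rep: "\<forall>l<r. \<forall>i\<in>A. \<alpha> l i = (\<Sum>t<s. \<gamma> l t * w t i)" by blast
  define d where "d = residual A s w (\<alpha> r)"
  define D where "D = Re (inner_on A d d)"
  have ad: "\<alpha> r i = (\<Sum>t<s. inner_on A (w t) (\<alpha> r) * w t i) + d i" for i
    unfolding d_def residual_def by simp
  show ?case
  proof (cases "D = 0")
    case True
    then have "\<forall>i\<in>A. d i = 0" using inner_on_self_eq_0_iff[OF assms] unfolding D_def by blast
    then show ?thesis using s o rep ad
      by (intro exI[of _ s] exI[of _ w] exI[of _ "\<gamma>(r := (\<lambda>t. inner_on A (w t) (\<alpha> r)))"])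
        (auto simp: less_Suc_eq)
  next
    case False
    then have D: "D > 0" using inner_on_self_nonneg[of A d] unfolding D_def by linarith
    define v where "v = normalize_on A d"
    define \<gamma>' where "\<gamma>' l t = (if t < s then (if l = r then inner_on A (w t) (\<alpha> r) else \<gamma> l t)
                             else if l = r then complex_of_real (sqrt D) else 0)" for l t
    have split: "(\<Sum>t<Suc s. \<gamma>' l t * (w(s := v)) t i) = (\<Sum>t<s. \<gamma>' l t * w t i) + \<gamma>' l s * v i"
      for l i by (simp add: sum.lessThan_Suc)
    have "d i = complex_of_real (sqrt D) * v i" for i
      unfolding v_def D_def using D[unfolded D_def] by (rule normalize_on_scale)
    then have "\<forall>l<Suc r. \<forall>i\<in>A. \<alpha> l i = (\<Sum>t<Suc s. \<gamma>' l t * (w(s := v)) t i)"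
      using rep ad unfolding split \<gamma>'_def by (auto simp: less_Suc_eq)
    moreover have "orthonormal_on A (Suc s) (w(s := v))"
      using orthonormal_on_normalized_residual[OF o] D unfolding v_def d_def D_def .
    ultimately show ?thesis using s Suc_le_mono by blast
  qed
qed

subsection \<open>Greedy capture of mass\<close>

lemma exists_ratio_ge_average:
  fixes a B :: "'j \<Rightarrow> real"
  assumes "finite J" "(\<Sum>j\<in>J. B j) > 0" "\<forall>j\<in>J. B j \<ge> 0" "\<forall>j\<in>J. B j = 0 \<longrightarrow> a j = 0"
  shows "\<exists>j\<in>J. B j > 0 \<and> a j * (\<Sum>j\<in>J. B j) \<ge> (\<Sum>j\<in>J. a j) * B j"
proof (rule ccontr)
  assume contra: "\<not> ?thesis"
  let ?SA = "\<Sum>j\<in>J. a j" and ?SB = "\<Sum>j\<in>J. B j"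
  have le: "a j * ?SB \<le> ?SA * B j" if j: "j \<in> J" for j
  proof (cases "B j = 0")
    case True
    then show ?thesis using assms(4) j by simp
  next
    case False
    then have "B j > 0" using assms(3) j by (simp add: order_less_le)
    then show ?thesis using contra j by auto
  qed
  obtain j where j: "j \<in> J" "B j > 0"
    using assms(2) sum_nonpos[of J B] by (meson not_le)
  then have "a j * ?SB < ?SA * B j" using contra by auto
  then have "(\<Sum>j\<in>J. a j * ?SB) < (\<Sum>j\<in>J. ?SA * B j)"
    using le j by (intro sum_strict_mono_ex1[OF assms(1)]) auto
  moreover have "(\<Sum>j\<in>J. a j * ?SB) = ?SA * ?SB" by (simp add: sum_distrib_right)
  moreover have "(\<Sum>j\<in>J. ?SA * B j) = ?SA * ?SB" by (simp add: sum_distrib_left)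
  ultimately show False by simp
qed

text \<open>A family \<open>X\<close> of \<open>n\<close> rows represents a vector of \<open>\<complex>\<^sup>n \<otimes> \<complex>\<^sup>A\<close>; its captured mass is the
  squared norm of its orthogonal projection onto \<open>\<complex>\<^sup>n \<otimes> span {w t | t < s}\<close>.\<close>

definition captured_mass ::
    "nat \<Rightarrow> 'i set \<Rightarrow> nat \<Rightarrow> (nat \<Rightarrow> 'i \<Rightarrow> complex) \<Rightarrow> (nat \<Rightarrow> 'i \<Rightarrow> complex) \<Rightarrow> real" where
  "captured_mass n A s w X = (\<Sum>p<n. \<Sum>t<s. (cmod (inner_on A (w t) (X p)))\<^sup>2)"

lemma captured_mass_extend:
  "captured_mass n A (Suc s) (w(s := v)) X = captured_mass n A s w X + (\<Sum>p<n. (cmod (inner_on A v (X p)))\<^sup>2)"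
  unfolding captured_mass_def by (simp add: sum.distrib)

lemma captured_mass_le:
  "orthonormal_on A s w \<Longrightarrow> captured_mass n A s w X \<le> (\<Sum>p<n. Re (inner_on A (X p) (X p)))"
  unfolding captured_mass_def by (intro sum_mono bessel_inequality)

definition coord_fun :: "'i \<Rightarrow> 'i \<Rightarrow> complex" where
  "coord_fun j = (\<lambda>i. if i = j then 1 else 0)"

lemma inner_on_coord_fun_right: "finite A \<Longrightarrow> j \<in> A \<Longrightarrow> inner_on A a (coord_fun j) = cnj (a j)"
  unfolding inner_on_def coord_fun_def by (simp add: if_distrib[of "\<lambda>x. _ * x"] cong: if_cong)

lemma inner_on_coord_fun_left: "finite A \<Longrightarrow> j \<in> A \<Longrightarrow> inner_on A (coord_fun j) b = b j"
  unfolding inner_on_def coord_fun_def by (simp add: if_distrib[of "\<lambda>x. cnj x * _"] cong: if_cong)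

lemma inner_on_residual_coord_fun:
  assumes "finite A" "j \<in> A"
  shows "inner_on A (residual A s w (coord_fun j)) b = residual A s w b j"
  unfolding residual_def inner_on_diff_left inner_on_sum_left
  using assms by (simp add: inner_on_coord_fun_left inner_on_coord_fun_right mult.commute)

lemma sum_residual_coord_fun_mass:
  assumes "finite A" "orthonormal_on A s w"
  shows "(\<Sum>j\<in>A. \<Sum>p<n. (cmod (inner_on A (residual A s w (coord_fun j)) (X p)))\<^sup>2)
       = (\<Sum>p<n. Re (inner_on A (X p) (X p))) - captured_mass n A s w X"
proof -
  have "(\<Sum>j\<in>A. \<Sum>p<n. (cmod (inner_on A (residual A s w (coord_fun j)) (X p)))\<^sup>2)
      = (\<Sum>p<n. Re (inner_on A (residual A s w (X p)) (residual A s w (X p))))"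
    using assms(1) by (simp add: inner_on_residual_coord_fun Re_inner_on_self sum.swap[of _ A])
  then show ?thesis
    unfolding Re_inner_on_residual_self[OF assms(2)] captured_mass_def by (simp add: sum_subtractf)
qed

lemma sum_residual_coord_fun_norm:
  assumes "finite A" "orthonormal_on A s w" "s \<le> card A"
  shows "(\<Sum>j\<in>A. Re (inner_on A (residual A s w (coord_fun j)) (residual A s w (coord_fun j))))
       = real (card A - s)"
proof -
  have unit: "(\<Sum>j\<in>A. (cmod (w t j))\<^sup>2) = 1" if "t < s" for t
    using assms(2) that Re_inner_on_self[of A "w t"] unfolding orthonormal_on_def by simp
  have "(\<Sum>j\<in>A. Re (inner_on A (residual A s w (coord_fun j)) (residual A s w (coord_fun j))))
      = (\<Sum>j\<in>A. 1 - (\<Sum>t<s. (cmod (w t j))\<^sup>2))"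
    using assms(1) by (intro sum.cong refl)
      (simp add: Re_inner_on_residual_self[OF assms(2)] inner_on_coord_fun_left inner_on_coord_fun_right,
        simp add: coord_fun_def)
  also have "\<dots> = real (card A) - (\<Sum>t<s. \<Sum>j\<in>A. (cmod (w t j))\<^sup>2)"
    by (simp add: sum_subtractf sum.swap[of _ A])
  also have "(\<Sum>t<s. \<Sum>j\<in>A. (cmod (w t j))\<^sup>2) = real s"
    using unit by simp
  finally show ?thesis using assms(3) by simp
qed

text \<open>Among the residuals of the coordinate vectors, one captures at least the average fraction
  \<open>1 / (card A - s)\<close> of the missing mass.\<close>

lemma greedy_extension_step:
  assumes fin: "finite A" and o: "orthonormal_on A s w" and s: "s < card A"
    and X: "(\<Sum>p<n. Re (inner_on A (X p) (X p))) = 1"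
  shows "\<exists>v. orthonormal_on A (Suc s) (w(s := v)) \<and>
     captured_mass n A (Suc s) (w(s := v)) X
       \<ge> captured_mass n A s w X + (1 - captured_mass n A s w X) / (card A - s)"
proof -
  define u where "u j = residual A s w (coord_fun j)" for j
  define a where "a j = (\<Sum>p<n. (cmod (inner_on A (u j) (X p)))\<^sup>2)" for j
  define B where "B j = Re (inner_on A (u j) (u j))" for j
  have sum_a: "(\<Sum>j\<in>A. a j) = 1 - captured_mass n A s w X"
    using sum_residual_coord_fun_mass[OF fin o] X unfolding a_def u_def by simp
  have sum_B: "(\<Sum>j\<in>A. B j) = real (card A - s)"
    using sum_residual_coord_fun_norm[OF fin o] s unfolding B_def u_def by simp
  have a0: "a j = 0" if "j \<in> A" "B j = 0" for j
  proof -
    have "\<forall>i\<in>A. u j i = 0" using that inner_on_self_eq_0_iff[OF fin] unfolding B_def by blast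
    then show ?thesis unfolding a_def inner_on_def by simp
  qed
  have "\<exists>j\<in>A. B j > 0 \<and> a j * (\<Sum>j\<in>A. B j) \<ge> (\<Sum>j\<in>A. a j) * B j"
    using sum_B s a0 inner_on_self_nonneg unfolding B_def by (intro exists_ratio_ge_average[OF fin]) auto
  then obtain j where Bj: "B j > 0" and aj: "a j * (\<Sum>j\<in>A. B j) \<ge> (\<Sum>j\<in>A. a j) * B j"
    by blast
  define v where "v = normalize_on A (u j)"
  have "(\<Sum>p<n. (cmod (inner_on A v (X p)))\<^sup>2) = a j / B j"
    using Bj unfolding v_def normalize_on_def inner_on_scale_left a_def B_def
    by (simp add: norm_divide power_divide sum_divide_distrib)
  moreover have "(1 - captured_mass n A s w X) / real (card A - s) \<le> a j / B j"
    using aj Bj s unfolding sum_a sum_B by (simp add: divide_simps mult.commute)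
  moreover have "orthonormal_on A (Suc s) (w(s := v))"
    using orthonormal_on_normalized_residual[OF o] Bj unfolding v_def u_def B_def by blast
  ultimately show ?thesis by (intro exI[of _ v]) (simp add: captured_mass_extend)
qed

lemma greedy_extension:
  assumes fin: "finite A" and o: "orthonormal_on A s w" and s: "s + i \<le> card A" "s < card A"
    and X: "(\<Sum>p<n. Re (inner_on A (X p) (X p))) = 1"
  shows "\<exists>w'. orthonormal_on A (s + i) w' \<and>
     1 - captured_mass n A (s + i) w' X
       \<le> (1 - captured_mass n A s w X) * real (card A - (s + i)) / real (card A - s)"
  using s(1)
proof (induction i)
  case 0
  show ?case using o s(2) by (intro exI[of _ w]) simp
next
  case (Suc i)
  then obtain w' where o': "orthonormal_on A (s + i) w'"
    and IH: "1 - captured_mass n A (s + i) w' X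
               \<le> (1 - captured_mass n A s w X) * real (card A - (s + i)) / real (card A - s)"
    by auto
  define D where "D = real (card A - (s + i))"
  have D: "D \<ge> 1" using Suc.prems unfolding D_def by simp
  obtain v where o'': "orthonormal_on A (Suc (s + i)) (w'(s + i := v))"
    and step: "captured_mass n A (Suc (s + i)) (w'(s + i := v)) X
       \<ge> captured_mass n A (s + i) w' X + (1 - captured_mass n A (s + i) w' X) / D"
    using greedy_extension_step[OF fin o' _ X] Suc.prems unfolding D_def by auto
  define M where "M = captured_mass n A (s + i) w' X"
  have "1 - captured_mass n A (Suc (s + i)) (w'(s + i := v)) X \<le> (1 - M) * (1 - 1 / D)"
    using step unfolding M_def by (simp add: right_diff_distrib)
  also have "\<dots> \<le> (1 - captured_mass n A s w X) * D / real (card A - s) * (1 - 1 / D)"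
    using IH D unfolding M_def D_def by (intro mult_right_mono) auto
  also have "\<dots> = (1 - captured_mass n A s w X) * (D * (1 - 1 / D)) / real (card A - s)"
    by simp
  also have "D * (1 - 1 / D) = real (card A - (s + Suc i))"
    using D Suc.prems unfolding D_def by (simp add: right_diff_distrib of_nat_diff)
  finally show ?case using o'' unfolding add_Suc_right by blast
qed

subsection \<open>Extending a Schmidt decomposition\<close>

lemma sum_lessThan_times_lessThan: "(\<Sum>p<n. \<Sum>t<s. f t p) = (\<Sum>(t, p)\<in>{..<s} \<times> {..<n}. f t p)"
  by (simp add: sum.cartesian_product[symmetric] sum.swap[of _ "{..<n}"])

text \<open>Cauchy-Schwarz in \<open>\<complex>\<^sup>n \<otimes> span w\<close>, written in the coordinates \<open>(t, p)\<close> of that space.\<close>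

lemma norm_overlap_le_captured_mass:
  assumes o: "orthonormal_on A s w"
    and Y: "\<And>p j. p < n \<Longrightarrow> j \<in> A \<Longrightarrow> Y p j = (\<Sum>t<s. y t p * w t j)"
  shows "(cmod (\<Sum>p<n. inner_on A (X p) (Y p)))\<^sup>2
       \<le> captured_mass n A s w X * (\<Sum>p<n. Re (inner_on A (Y p) (Y p)))"
proof -
  let ?S = "{..<s} \<times> {..<n}"
  define C where "C = (\<lambda>(t, p). inner_on A (w t) (X p))"
  define Yc where "Yc = (\<lambda>(t, p). y t p)"
  have "inner_on A (X p) (Y p) = (\<Sum>t<s. cnj (C (t, p)) * Yc (t, p))" if "p < n" for p
  proof -
    have "inner_on A (X p) (Y p) = inner_on A (X p) (\<lambda>j. \<Sum>t<s. y t p * w t j)"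
      using Y that by (intro inner_on_cong) auto
    then show ?thesis
      unfolding inner_on_sum_right C_def Yc_def by (simp add: cnj_inner_on mult.commute)
  qed
  then have XY: "(\<Sum>p<n. inner_on A (X p) (Y p)) = inner_on ?S C Yc"
    by (simp add: inner_on_def[of ?S] sum_lessThan_times_lessThan case_prod_beta)
  have "inner_on A (Y p) (Y p) = (\<Sum>t<s. cnj (Yc (t, p)) * Yc (t, p))" if "p < n" for p
  proof -
    have "inner_on A (Y p) (Y p) = inner_on A (\<lambda>j. \<Sum>t<s. y t p * w t j) (\<lambda>j. \<Sum>t<s. y t p * w t j)"
      using Y that by (intro inner_on_cong) auto
    then show ?thesis unfolding inner_on_orthonormal_expansion_self[OF o] Yc_def by simp
  qed
  then have YY: "(\<Sum>p<n. Re (inner_on A (Y p) (Y p))) = Re (inner_on ?S Yc Yc)"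
    by (simp add: inner_on_def[of ?S] sum_lessThan_times_lessThan case_prod_beta)
  have CC: "Re (inner_on ?S C C) = captured_mass n A s w X"
    unfolding Re_inner_on_self captured_mass_def sum_lessThan_times_lessThan C_def
    by (simp add: case_prod_beta)
  show ?thesis
    using cauchy_schwarz_inner_on[of ?S C Yc] unfolding XY YY CC by simp
qed

lemma greedy_bound_arith:
  fixes a M0 M :: real and m s0 d :: nat
  assumes "a \<le> M0" "M0 \<le> 1" "1 \<le> s0" "s0 + d \<le> m" "s0 < m"
    and M: "1 - M \<le> (1 - M0) * real (m - (s0 + d)) / real (m - s0)"
  shows "a + real d / real (m - 1) * (1 - a) \<le> M"
proof -
  define c where "c = real d / real (m - s0)"
  have ms: "real (m - s0) > 0" using assms by simp
  have c1: "c \<le> 1" and c: "real d / real (m - 1) \<le> c"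
    unfolding c_def using assms ms by (auto intro!: divide_left_mono simp: divide_le_eq_1 of_nat_diff)
  have "real (m - (s0 + d)) / real (m - s0) = 1 - c"
    unfolding c_def using assms ms by (simp add: field_simps of_nat_diff)
  then have "1 - M \<le> (1 - M0) * (1 - c)" using M by (metis times_divide_eq_right)
  also have "\<dots> \<le> (1 - a) * (1 - c)" using assms c1 by (intro mult_right_mono) auto
  finally have Mc: "a + c * (1 - a) \<le> M" by (simp add: algebra_simps)
  have "a + real d / real (m - 1) * (1 - a) \<le> a + c * (1 - a)"
    using c assms by (intro add_left_mono mult_right_mono) auto
  then show ?thesis using Mc by (rule order_trans)
qed

lemma orthonormal_expansion_of_rank_le:
  assumes "finite A" and "\<And>p j. p < n \<Longrightarrow> j \<in> A \<Longrightarrow> Y p j = (\<Sum>l<r. \<beta> l p * \<alpha> l j)"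
  shows "\<exists>s w y. s \<le> r \<and> orthonormal_on A s w \<and> (\<forall>p<n. \<forall>j\<in>A. Y p j = (\<Sum>t<s. y t p * w t j))"
proof -
  obtain s w \<gamma> where s: "s \<le> r" and o: "orthonormal_on A s w"
    and \<alpha>: "\<forall>l<r. \<forall>j\<in>A. \<alpha> l j = (\<Sum>t<s. \<gamma> l t * w t j)"
    using orthonormal_spanning_family[OF assms(1)] by blast
  define y where "y t p = (\<Sum>l<r. \<beta> l p * \<gamma> l t)" for t p
  have "Y p j = (\<Sum>t<s. y t p * w t j)" if "p < n" "j \<in> A" for p j
    using assms(2)[OF that] \<alpha> that(2) unfolding y_def
    by (simp add: sum_distrib_left sum_distrib_right sum.swap[of _ "{..<r}"] mult.assoc)
  then show ?thesis using s o by blast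
qed

lemma exists_orthonormal_on_captured_mass_ge:
  fixes X Y :: "nat \<Rightarrow> 'i \<Rightarrow> complex"
  assumes fin: "finite A" and hk: "1 \<le> h" "h \<le> k" "k \<le> card A"
    and X: "(\<Sum>p<n. Re (inner_on A (X p) (X p))) = 1"
    and Y: "(\<Sum>p<n. Re (inner_on A (Y p) (Y p))) = 1"
    and Y_rank: "\<And>p j. p < n \<Longrightarrow> j \<in> A \<Longrightarrow> Y p j = (\<Sum>l<r. \<beta> l p * \<alpha> l j)" and r: "r \<le> h"
  defines "a \<equiv> (cmod (\<Sum>p<n. inner_on A (X p) (Y p)))\<^sup>2"
  shows "\<exists>s w. s \<le> k \<and> orthonormal_on A s w \<and>
           a + real (k - h) / real (card A - 1) * (1 - a) \<le> captured_mass n A s w X"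
proof -
  obtain s0 w y where s0: "s0 \<le> r" and o: "orthonormal_on A s0 w"
    and Yw: "\<forall>p<n. \<forall>j\<in>A. Y p j = (\<Sum>t<s0. y t p * w t j)"
    using orthonormal_expansion_of_rank_le[where n = n and Y = Y, OF fin Y_rank] by blast
  define M0 where "M0 = captured_mass n A s0 w X"
  have aM0: "a \<le> M0"
    using norm_overlap_le_captured_mass[of A s0 w n Y y X, OF o Yw[rule_format]] Y
    unfolding a_def M0_def by simp
  have M0: "M0 \<le> 1" using captured_mass_le[OF o, of n X] X unfolding M0_def by simp
  have "s0 \<noteq> 0"
  proof
    assume "s0 = 0"
    then have "inner_on A (Y p) (Y p) = 0" if "p < n" for p
      using Yw that unfolding inner_on_def by simp
    then show False using Y by simp
  qed
  show ?thesis
  proof (cases "k = h")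
    case True
    then show ?thesis using aM0 o s0 r unfolding M0_def by (intro exI[of _ s0] exI[of _ w]) auto
  next
    case False
    have "s0 + (k - h) \<le> card A" "s0 < card A" using s0 r hk False by auto
    from greedy_extension[OF fin o this X]
    obtain w' where o': "orthonormal_on A (s0 + (k - h)) w'"
      and M': "1 - captured_mass n A (s0 + (k - h)) w' X
               \<le> (1 - M0) * real (card A - (s0 + (k - h))) / real (card A - s0)"
      unfolding M0_def by blast
    have "a + real (k - h) / real (card A - 1) * (1 - a) \<le> captured_mass n A (s0 + (k - h)) w' X"
      using \<open>s0 \<noteq> 0\<close> s0 r hk False by (intro greedy_bound_arith[OF aM0 M0 _ _ _ M']) auto
    then show ?thesis using o' s0 r hk by (intro exI[of _ "s0 + (k - h)"] exI[of _ w']) auto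
  qed
qed

subsection \<open>Vectors of \<open>\<complex>\<^sup>n \<otimes> \<complex>\<^sup>m\<close>\<close>

abbreviation vec_inner :: "nat \<Rightarrow> complex vec \<Rightarrow> complex vec \<Rightarrow> complex" where
  "vec_inner d x y \<equiv> inner_on {..<d} (($) x) (($) y)"

abbreviation vec_sq_norm :: "nat \<Rightarrow> complex vec \<Rightarrow> real" where
  "vec_sq_norm d x \<equiv> Re (vec_inner d x x)"

lemma unit_vec_c_iff: "unit_vec_c d v \<longleftrightarrow> v \<in> carrier_vec d \<and> vec_sq_norm d v = 1"
  unfolding unit_vec_c_def Re_inner_on_self ..

lemma braket_eq_vec_inner: "dim_vec w = d \<Longrightarrow> braket w X v = vec_inner d w (X *\<^sub>v v)"
  unfolding braket_def inner_on_def by simp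

definition tensor_slice :: "nat \<Rightarrow> complex vec \<Rightarrow> nat \<Rightarrow> nat \<Rightarrow> complex" where
  "tensor_slice m x p j = x $ (p * m + j)"

lemma tensor_index_less: "j < m \<Longrightarrow> p < n \<Longrightarrow> p * m + j < n * (m::nat)"
proof -
  assume "j < m" "p < n"
  then have "p * m + j < Suc p * m" by simp
  also have "\<dots> \<le> n * m" using \<open>p < n\<close> by (intro mult_le_mono1) simp
  finally show ?thesis .
qed

lemma sum_lessThan_mult:
  fixes f :: "nat \<Rightarrow> 'a::comm_monoid_add"
  shows "(\<Sum>i<n * m. f i) = (\<Sum>p<n. \<Sum>j<m. f (p * m + j))"
  by (simp add: sum.nat_group[symmetric] sum.shift_bounds_nat_ivl[of f 0 _ m, simplified]
      add.commute atLeast0LessThan)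

lemma vec_inner_tensor_slice:
  "vec_inner (n * m) x y = (\<Sum>p<n. inner_on {..<m} (tensor_slice m x p) (tensor_slice m y p))"
  unfolding inner_on_def tensor_slice_def by (rule sum_lessThan_mult)

lemma vec_sq_norm_tensor_slice:
  "vec_sq_norm (n * m) x = (\<Sum>p<n. Re (inner_on {..<m} (tensor_slice m x p) (tensor_slice m x p)))"
  unfolding vec_inner_tensor_slice by simp

lemma rank_le_of_sum_outer:
  fixes Z :: "complex mat"
  shows "Z \<in> carrier_mat n m \<Longrightarrow> (\<forall>p<n. \<forall>j<m. Z $$ (p, j) = (\<Sum>t<s. f t p * g t j))
    \<Longrightarrow> vec_space.rank n Z \<le> s"
proof (induction s arbitrary: Z)
  case 0
  then have "Z = 0\<^sub>m n m" by (intro eq_matI) auto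
  then show ?case using vec_space.rank_0I by simp
next
  case (Suc s)
  define Z1 where "Z1 = mat n m (\<lambda>(p, j). \<Sum>t<s. f t p * g t j)"
  define Z2 where "Z2 = mat n m (\<lambda>(p, j). f s p * g s j)"
  have Z1: "Z1 \<in> carrier_mat n m" and Z2: "Z2 \<in> carrier_mat n m" unfolding Z1_def Z2_def by auto
  have "Z = Z1 + Z2" using Suc.prems unfolding Z1_def Z2_def by (intro eq_matI) auto
  moreover have "vec_space.rank n Z1 \<le> s" using Suc.IH[OF Z1] unfolding Z1_def by simp
  moreover have "vec_space.rank n Z2 \<le> 1"
    using vec_space.rank_le_1_product_entries[OF Z2, of "f s" "g s"] unfolding Z2_def by simp
  ultimately show ?case using vec_space.rank_subadditive[OF Z1 Z2] by simp
qed

lemma rank_factorization: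
  fixes Y :: "complex mat"
  assumes Y: "Y \<in> carrier_mat n m"
  shows "\<exists>\<beta> \<alpha>. \<forall>p<n. \<forall>j<m. Y $$ (p, j) = (\<Sum>l<vec_space.rank n Y. \<beta> l p * \<alpha> l j)"
proof -
  interpret vec_space "TYPE(complex)" n .
  let ?indpt = "\<lambda>T. T \<subseteq> set (cols Y) \<and> lin_indpt T"
  obtain S where S: "maximal S ?indpt"
    using maximal_exists[of ?indpt "card (set (cols Y))" "{}"]
    by (meson List.finite_set card_mono empty_iff empty_subsetI finite_lin_indpt2 rev_finite_subset)
  have cols: "set (cols Y) \<subseteq> carrier_vec n" using Y cols_dim by blast
  have S_cols: "S \<subseteq> set (cols Y)" and S_indpt: "lin_indpt S" using S unfolding maximal_def by auto
  have SC: "S \<subseteq> carrier_vec n" and finS: "finite S"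
    using S_cols cols finite_subset by auto
  have span: "c \<in> span S" if c: "c \<in> set (cols Y)" for c
  proof (rule ccontr)
    assume c_notin: "c \<notin> span S"
    then have "c \<notin> S" using span_mem[OF SC] by blast
    then have "lin_indpt (S \<union> {c})"
      using lin_dep_iff_in_span[OF SC S_indpt _ \<open>c \<notin> S\<close>] c c_notin cols by blast
    then show False using S c S_cols \<open>c \<notin> S\<close> unfolding maximal_def by blast
  qed
  have "\<forall>j<m. \<exists>a. lincomb a S = col Y j"
  proof (intro allI impI)
    fix j assume "j < m"
    then have "col Y j \<in> set (cols Y)" using Y by (simp add: cols_def)
    then show "\<exists>a. lincomb a S = col Y j" using finite_in_span[OF finS _ span] SC by blast
  qed
  then obtain a where a: "\<forall>j<m. lincomb (a j) S = col Y j" by metis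
  obtain bs where bs: "distinct bs" "set bs = S" using finite_distinct_list[OF finS] by blast
  have rank: "rank Y = length bs" using rank_card_indpt[OF Y S] bs distinct_card by metis
  have bij: "bij_betw ((!) bs) {..<length bs} S"
    using bs by (auto simp: bij_betw_def inj_on_nth set_conv_nth)
  have "Y $$ (p, j) = (\<Sum>l<length bs. (bs ! l) $ p * a j (bs ! l))" if "p < n" "j < m" for p j
  proof -
    have "Y $$ (p, j) = lincomb (a j) S $ p" using that a Y by simp
    also have "\<dots> = (\<Sum>x\<in>S. a j x * x $ p)" by (rule lincomb_index[OF that(1) SC])
    also have "\<dots> = (\<Sum>l<length bs. a j (bs ! l) * (bs ! l) $ p)"
      using bij by (simp add: sum.reindex_bij_betw[symmetric])
    finally show ?thesis by (simp add: mult.commute)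
  qed
  then show ?thesis unfolding rank
    by (intro exI[of _ "\<lambda>l p. (bs ! l) $ p"] exI[of _ "\<lambda>l j. a j (bs ! l)"]) simp
qed

lemma coeff_mat_index: "p < n \<Longrightarrow> j < m \<Longrightarrow> coeff_mat n m x $$ (p, j) = tensor_slice m x p j"
  unfolding coeff_mat_def tensor_slice_def by simp

lemma schmidt_decomposition:
  "\<exists>\<beta> \<alpha>. \<forall>p<n. \<forall>j<m. tensor_slice m y p j = (\<Sum>l<schmidt_rank n m y. \<beta> l p * \<alpha> l j)"
  using rank_factorization[of "coeff_mat n m y" n m]
  unfolding schmidt_rank_def by (simp add: coeff_mat_def tensor_slice_def)

lemma schmidt_rank_le_of_decomposition:
  assumes "\<And>p j. p < n \<Longrightarrow> j < m \<Longrightarrow> tensor_slice m z p j = (\<Sum>t<s. f t p * g t j)"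
  shows "schmidt_rank n m z \<le> s"
  unfolding schmidt_rank_def
  by (rule rank_le_of_sum_outer[where m = m and f = f and g = g]) (simp add: coeff_mat_def, simp add: coeff_mat_index assms)

lemma unit_vec_c_unit_vec: "i < d \<Longrightarrow> unit_vec_c d (unit_vec d i)"
  unfolding unit_vec_c_def by (simp add: if_distrib[of "\<lambda>x. (cmod x)\<^sup>2"] cong: if_cong)

lemma schmidt_rank_unit_vec: "i < n * m \<Longrightarrow> schmidt_rank n m (unit_vec (n * m) i) \<le> 1"
proof (rule schmidt_rank_le_of_decomposition)
  fix p j assume i: "i < n * m" and pj: "p < n" "j < m"
  have "p * m + j = i \<longleftrightarrow> p = i div m \<and> j = i mod m"
    using pj(2) by auto
  then show "tensor_slice m (unit_vec (n * m) i) p j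
      = (\<Sum>t<(1::nat). (if p = i div m then 1 else 0) * (if j = i mod m then 1 else 0))"
    unfolding tensor_slice_def using tensor_index_less[OF pj(2,1)] i by auto
qed

text \<open>The witness is the normalised projection of \<open>x\<close> onto \<open>\<complex>\<^sup>n \<otimes> span w\<close>.\<close>

lemma exists_schmidt_rank_le_inner_eq_sqrt_captured_mass:
  assumes o: "orthonormal_on {..<m} s w" and M: "captured_mass n {..<m} s w (tensor_slice m x) > 0"
  shows "\<exists>z. unit_vec_c (n * m) z \<and> schmidt_rank n m z \<le> s \<and>
     vec_inner (n * m) x z = complex_of_real (sqrt (captured_mass n {..<m} s w (tensor_slice m x)))"
proof -
  define M where "M = captured_mass n {..<m} s w (tensor_slice m x)"
  define c where "c t p = inner_on {..<m} (w t) (tensor_slice m x p)" for t p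
  define y where "y t p = complex_of_real (1 / sqrt M) * c t p" for t p
  define z where "z = vec (n * m) (\<lambda>i. \<Sum>t<s. y t (i div m) * w t (i mod m))"
  have Mc: "M = (\<Sum>p<n. \<Sum>t<s. (cmod (c t p))\<^sup>2)" unfolding M_def captured_mass_def c_def ..
  have slice_z: "tensor_slice m z p j = (\<Sum>t<s. y t p * w t j)" if "p < n" "j < m" for p j
    unfolding tensor_slice_def z_def using tensor_index_less[OF that(2,1)] that by simp
  define Z where "Z p = (\<lambda>j. \<Sum>t<s. y t p * w t j)" for p
  have inner_z: "inner_on {..<m} a (tensor_slice m z p) = inner_on {..<m} a (Z p)"
    and sq_norm_z: "inner_on {..<m} (tensor_slice m z p) (tensor_slice m z p) = inner_on {..<m} (Z p) (Z p)"
    if "p < n" for a p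
    using slice_z that unfolding Z_def by (auto intro: inner_on_cong)
  have "vec_inner (n * m) x z = (\<Sum>p<n. \<Sum>t<s. y t p * cnj (c t p))"
    unfolding vec_inner_tensor_slice
    by (intro sum.cong refl) (simp add: inner_z Z_def inner_on_sum_right c_def cnj_inner_on)
  also have "\<dots> = complex_of_real (1 / sqrt M * M)"
    unfolding y_def Mc by (simp add: mult.assoc sum_distrib_left flip: complex_norm_square)
  also have "1 / sqrt M * M = sqrt M" using M real_div_sqrt[of M] unfolding M_def by simp
  finally have inner: "vec_inner (n * m) x z = complex_of_real (sqrt M)" .
  have "vec_sq_norm (n * m) z = (\<Sum>p<n. \<Sum>t<s. (cmod (y t p))\<^sup>2)"
    unfolding vec_sq_norm_tensor_slice
    by (intro sum.cong refl)
      (simp only: lessThan_iff sq_norm_z Z_def inner_on_orthonormal_expansion_self[OF o] Re_sum Re_cnj_mult_self)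
  also have "\<dots> = (\<Sum>p<n. \<Sum>t<s. (cmod (c t p))\<^sup>2) / M"
    unfolding y_def using M unfolding M_def by (simp add: norm_divide power_divide sum_divide_distrib)
  also have "\<dots> = 1" using M unfolding Mc[symmetric] M_def by simp
  finally have "unit_vec_c (n * m) z" unfolding unit_vec_c_iff z_def by simp
  moreover have "schmidt_rank n m z \<le> s" by (rule schmidt_rank_le_of_decomposition[OF slice_z])
  ultimately show ?thesis using inner unfolding M_def by blast
qed

lemma exists_schmidt_rank_le_overlap_ge:
  assumes hk: "1 \<le> h" "h \<le> k" "k \<le> m"
    and x: "unit_vec_c (n * m) x" and y: "unit_vec_c (n * m) y" and y_rank: "schmidt_rank n m y \<le> h"
  defines "a \<equiv> (cmod (vec_inner (n * m) x y))\<^sup>2"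
  shows "\<exists>z. unit_vec_c (n * m) z \<and> schmidt_rank n m z \<le> k \<and>
           a + real (k - h) / real (m - 1) * (1 - a) \<le> (cmod (vec_inner (n * m) x z))\<^sup>2"
proof -
  obtain \<beta> \<alpha> where y_dec: "\<forall>p<n. \<forall>j<m. tensor_slice m y p j = (\<Sum>l<schmidt_rank n m y. \<beta> l p * \<alpha> l j)"
    using schmidt_decomposition by blast
  have "\<exists>s w. s \<le> k \<and> orthonormal_on {..<m} s w \<and>
      a + real (k - h) / real (card {..<m} - 1) * (1 - a) \<le> captured_mass n {..<m} s w (tensor_slice m x)"
    unfolding a_def vec_inner_tensor_slice
    using x y y_dec y_rank hk unfolding unit_vec_c_iff vec_sq_norm_tensor_slice
    by (intro exists_orthonormal_on_captured_mass_ge) auto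
  then obtain s w where s: "s \<le> k" and o: "orthonormal_on {..<m} s w"
    and M: "a + real (k - h) / real (m - 1) * (1 - a) \<le> captured_mass n {..<m} s w (tensor_slice m x)"
    by auto
  show ?thesis
  proof (cases "captured_mass n {..<m} s w (tensor_slice m x) > 0")
    case True
    with exists_schmidt_rank_le_inner_eq_sqrt_captured_mass[OF o] obtain z
      where "unit_vec_c (n * m) z" "schmidt_rank n m z \<le> s"
        "vec_inner (n * m) x z = complex_of_real (sqrt (captured_mass n {..<m} s w (tensor_slice m x)))"
      by blast
    then show ?thesis using s M True by (intro exI[of _ z]) auto
  next
    case False
    have "0 \<le> a" unfolding a_def by simp
    then have "a + real (k - h) / real (m - 1) * (1 - a) \<le> a"
      using M False by (meson order_trans not_less)
    then show ?thesis using y y_rank hk unfolding a_def by (intro exI[of _ y]) auto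
  qed
qed

subsection \<open>Orthogonal projections\<close>

lemma mult_mat_vec_index:
  "P \<in> carrier_mat d d \<Longrightarrow> v \<in> carrier_vec d \<Longrightarrow> i < d \<Longrightarrow> (P *\<^sub>v v) $ i = (\<Sum>j<d. P $$ (i, j) * v $ j)"
  by (simp add: scalar_prod_def atLeast0LessThan)

lemma hermitian_vec_inner:
  assumes P: "P \<in> carrier_mat d d" and H: "\<forall>i<d. \<forall>j<d. P $$ (i, j) = cnj (P $$ (j, i))"
    and a: "a \<in> carrier_vec d" and b: "b \<in> carrier_vec d"
  shows "vec_inner d (P *\<^sub>v a) b = vec_inner d a (P *\<^sub>v b)"
proof -
  have "vec_inner d (P *\<^sub>v a) b = (\<Sum>i<d. \<Sum>j<d. cnj (P $$ (i, j)) * cnj (a $ j) * b $ i)"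
    unfolding inner_on_def
    by (intro sum.cong refl) (simp only: lessThan_iff mult_mat_vec_index[OF P a] cnj_sum
        complex_cnj_mult sum_distrib_right)
  also have "\<dots> = (\<Sum>j<d. \<Sum>i<d. cnj (a $ j) * (P $$ (j, i) * b $ i))"
  proof (subst sum.swap, intro sum.cong refl)
    fix i j assume "j \<in> {..<d}" "i \<in> {..<d}"
    then have "P $$ (j, i) = cnj (P $$ (i, j))" using H by blast
    then show "cnj (P $$ (i, j)) * cnj (a $ j) * b $ i = cnj (a $ j) * (P $$ (j, i) * b $ i)"
      by (simp add: mult_ac)
  qed
  also have "\<dots> = vec_inner d a (P *\<^sub>v b)"
    unfolding inner_on_def
    by (intro sum.cong refl) (simp only: lessThan_iff mult_mat_vec_index[OF P b] sum_distrib_left)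
  finally show ?thesis .
qed

lemma orth_projectionD:
  assumes "orth_projection d P"
  shows "P \<in> carrier_mat d d" "P * P = P" "\<forall>i<d. \<forall>j<d. P $$ (i, j) = cnj (P $$ (j, i))"
  using assms unfolding orth_projection_def by blast+

lemma orth_projection_mult_mat_vec_idem:
  assumes P: "orth_projection d P" and v: "v \<in> carrier_vec d"
  shows "P *\<^sub>v (P *\<^sub>v v) = P *\<^sub>v v"
  using assoc_mult_mat_vec[OF orth_projectionD(1)[OF P] orth_projectionD(1)[OF P] v]
  unfolding orth_projectionD(2)[OF P] by simp

lemma orth_projection_vec_inner:
  "orth_projection d P \<Longrightarrow> a \<in> carrier_vec d \<Longrightarrow> b \<in> carrier_vec d
    \<Longrightarrow> vec_inner d (P *\<^sub>v a) b = vec_inner d a (P *\<^sub>v b)"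
  using hermitian_vec_inner orth_projectionD(1,3) by blast

lemma orth_projection_vec_inner_image:
  assumes P: "orth_projection d P" and a: "a \<in> carrier_vec d" and b: "b \<in> carrier_vec d"
  shows "vec_inner d (P *\<^sub>v a) (P *\<^sub>v b) = vec_inner d a (P *\<^sub>v b)"
proof -
  have "P *\<^sub>v b \<in> carrier_vec d" using orth_projectionD(1)[OF P] b by simp
  then show ?thesis
    by (simp only: orth_projection_vec_inner[OF P a] orth_projection_mult_mat_vec_idem[OF P b])
qed

lemma braket_orth_projection:
  assumes P: "orth_projection d P" and v: "v \<in> carrier_vec d" and w: "w \<in> carrier_vec d"
  shows "braket w P v = vec_inner d (P *\<^sub>v w) (P *\<^sub>v v)"
proof -
  have "dim_vec w = d" using w by simp
  then show ?thesis
    unfolding orth_projection_vec_inner_image[OF P w v] by (rule braket_eq_vec_inner)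
qed

lemma norm_braket_orth_projection_le:
  assumes "orth_projection d P" "v \<in> carrier_vec d" "w \<in> carrier_vec d"
  shows "cmod (braket w P v) \<le> max (vec_sq_norm d (P *\<^sub>v v)) (vec_sq_norm d (P *\<^sub>v w))"
proof (rule power2_le_imp_le)
  have "(cmod (braket w P v))\<^sup>2 \<le> vec_sq_norm d (P *\<^sub>v w) * vec_sq_norm d (P *\<^sub>v v)"
    unfolding braket_orth_projection[OF assms] by (rule cauchy_schwarz_inner_on) simp
  also have "\<dots> \<le> (max (vec_sq_norm d (P *\<^sub>v v)) (vec_sq_norm d (P *\<^sub>v w)))\<^sup>2"
    unfolding power2_eq_square by (intro mult_mono) (simp_all add: le_max_iff_disj inner_on_self_nonneg)
  finally show "(cmod (braket w P v))\<^sup>2 \<le> \<dots>" .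
qed (simp add: le_max_iff_disj inner_on_self_nonneg)

lemma norm_braket_orth_projection_self:
  assumes "orth_projection d P" "v \<in> carrier_vec d"
  shows "cmod (braket v P v) = vec_sq_norm d (P *\<^sub>v v)"
proof -
  have "braket v P v = complex_of_real (vec_sq_norm d (P *\<^sub>v v))"
    unfolding braket_orth_projection[OF assms assms(2)] by (rule inner_on_self_real)
  then show ?thesis by (simp add: inner_on_self_nonneg)
qed

lemma vec_sq_norm_orth_projection_le_1:
  assumes P: "orth_projection d P" and "unit_vec_c d v"
  shows "vec_sq_norm d (P *\<^sub>v v) \<le> 1"
proof (rule ccontr)
  let ?q = "vec_sq_norm d (P *\<^sub>v v)"
  assume "\<not> ?q \<le> 1"
  have v: "v \<in> carrier_vec d" "vec_sq_norm d v = 1" using assms(2) unfolding unit_vec_c_iff by auto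
  have "?q\<^sup>2 \<le> (cmod (vec_inner d v (P *\<^sub>v v)))\<^sup>2"
    unfolding orth_projection_vec_inner_image[OF P v(1) v(1), symmetric]
    by (intro power_mono complex_Re_le_cmod inner_on_self_nonneg)
  also have "\<dots> \<le> ?q"
    using cauchy_schwarz_inner_on[of "{..<d}" "($) v" "($) (P *\<^sub>v v)"] v(2) by simp
  finally have "?q * ?q \<le> ?q * 1" by (simp add: power2_eq_square)
  moreover have "?q * 1 < ?q * ?q" using \<open>\<not> ?q \<le> 1\<close> by (intro mult_strict_left_mono) auto
  ultimately show False by simp
qed

lemma unit_vec_c_normalize:
  assumes "u \<in> carrier_vec d" "vec_sq_norm d u > 0"
  shows "unit_vec_c d (complex_of_real (1 / sqrt (vec_sq_norm d u)) \<cdot>\<^sub>v u)"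
proof -
  have "vec_inner d (complex_of_real (1 / sqrt (vec_sq_norm d u)) \<cdot>\<^sub>v u)
      (complex_of_real (1 / sqrt (vec_sq_norm d u)) \<cdot>\<^sub>v u)
      = inner_on {..<d} (normalize_on {..<d} (($) u)) (normalize_on {..<d} (($) u))"
    using assms(1) by (intro inner_on_cong) (auto simp: normalize_on_def)
  then show ?thesis
    using inner_on_normalize_on_self[OF assms(2)] assms(1) unfolding unit_vec_c_iff by simp
qed

text \<open>The witness is the normalisation of \<open>Pu\<close>.\<close>

lemma orth_projection_normalized_image:
  assumes P: "orth_projection d P" and u: "u \<in> carrier_vec d" and q: "vec_sq_norm d (P *\<^sub>v u) > 0"
  shows "\<exists>x. unit_vec_c d x \<and> P *\<^sub>v x = x \<and> (cmod (vec_inner d x u))\<^sup>2 = vec_sq_norm d (P *\<^sub>v u)"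
proof -
  define q where "q = vec_sq_norm d (P *\<^sub>v u)"
  define x where "x = complex_of_real (1 / sqrt q) \<cdot>\<^sub>v (P *\<^sub>v u)"
  have PC: "P \<in> carrier_mat d d" using orth_projectionD(1)[OF P] .
  have Pu: "P *\<^sub>v u \<in> carrier_vec d" using PC u by simp
  have "vec_inner d x u
      = inner_on {..<d} (\<lambda>i. complex_of_real (1 / sqrt q) * (P *\<^sub>v u) $ i) (($) u)"
    unfolding x_def using PC by (intro inner_on_cong) auto
  also have "\<dots> = complex_of_real (1 / sqrt q) * vec_inner d (P *\<^sub>v u) u"
    by (simp only: inner_on_scale_left complex_cnj_complex_of_real)
  also have "vec_inner d (P *\<^sub>v u) u = complex_of_real q"
    unfolding q_def orth_projection_vec_inner[OF P u u] orth_projection_vec_inner_image[OF P u u, symmetric]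
    by (rule inner_on_self_real)
  finally have "(cmod (vec_inner d x u))\<^sup>2 = q"
    using q unfolding q_def[symmetric] by (simp add: norm_divide power2_eq_square)
  moreover have "unit_vec_c d x" unfolding x_def q_def by (rule unit_vec_c_normalize[OF Pu q])
  moreover have "P *\<^sub>v x = x"
    unfolding x_def using mult_mat_vec[OF PC Pu] orth_projection_mult_mat_vec_idem[OF P u] by simp
  ultimately show ?thesis unfolding q_def by blast
qed

lemma exists_fixed_unit_vec_overlap_ge:
  assumes P: "orth_projection d P" and P0: "P \<noteq> 0\<^sub>m d d" and y: "unit_vec_c d y"
  shows "\<exists>x. unit_vec_c d x \<and> P *\<^sub>v x = x \<and> vec_sq_norm d (P *\<^sub>v y) \<le> (cmod (vec_inner d x y))\<^sup>2"
proof (cases "vec_sq_norm d (P *\<^sub>v y) > 0")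
  case True
  have "y \<in> carrier_vec d" using y unfolding unit_vec_c_iff by simp
  from orth_projection_normalized_image[OF P this True] show ?thesis by (metis order_refl)
next
  case False
  have PC: "P \<in> carrier_mat d d" using orth_projectionD(1)[OF P] .
  obtain i j where ij: "i < d" "j < d" "P $$ (i, j) \<noteq> 0"
  proof (rule ccontr)
    assume "\<not> thesis"
    then have "P = 0\<^sub>m d d" using PC that by (intro eq_matI) auto
    then show False using P0 by simp
  qed
  define u where "u = P *\<^sub>v unit_vec d j"
  have "u $ i = P $$ (i, j)"
    unfolding u_def using PC ij by (simp add: mult_mat_vec_index if_distrib[of "\<lambda>x. _ * x"] cong: if_cong)
  then have "Re (inner_on {..<d} (($) u) (($) u)) \<noteq> 0"
    using inner_on_self_eq_0_iff[of "{..<d}" "($) u"] ij by auto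
  then have "vec_sq_norm d (P *\<^sub>v unit_vec d j) > 0"
    using inner_on_self_nonneg[of "{..<d}" "($) u"] unfolding u_def by linarith
  then obtain x where "unit_vec_c d x" "P *\<^sub>v x = x"
    using orth_projection_normalized_image[OF P unit_vec_carrier] by blast
  moreover have "vec_sq_norm d (P *\<^sub>v y) \<le> (cmod (vec_inner d x y))\<^sup>2"
    using False zero_le_power2[of "cmod (vec_inner d x y)"] by linarith
  ultimately show ?thesis by blast
qed

subsection \<open>The norms \<open>S(k)\<close>\<close>

definition S_values :: "nat \<Rightarrow> nat \<Rightarrow> nat \<Rightarrow> complex mat \<Rightarrow> real set" where
  "S_values n m k X = {cmod (braket w X v) | v w.
      unit_vec_c (n * m) v \<and> unit_vec_c (n * m) w \<and> schmidt_rank n m v \<le> k \<and> schmidt_rank n m w \<le> k}"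

lemma S_norm_eq_Sup: "S_norm n m k X = Sup (S_values n m k X)"
  unfolding S_norm_def S_values_def ..

lemma norm_braket_in_S_values:
  "unit_vec_c (n * m) v \<Longrightarrow> unit_vec_c (n * m) w \<Longrightarrow> schmidt_rank n m v \<le> k \<Longrightarrow> schmidt_rank n m w \<le> k
    \<Longrightarrow> cmod (braket w X v) \<in> S_values n m k X"
  unfolding S_values_def by blast

lemma S_values_nonempty: "0 < n * m \<Longrightarrow> 1 \<le> k \<Longrightarrow> S_values n m k X \<noteq> {}"
  using norm_braket_in_S_values[OF unit_vec_c_unit_vec unit_vec_c_unit_vec
      order_trans[OF schmidt_rank_unit_vec] order_trans[OF schmidt_rank_unit_vec]]
  by blast

lemma S_values_orth_projection_le_1:
  assumes P: "orth_projection (n * m) P" and c: "c \<in> S_values n m k P"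
  shows "c \<le> 1"
proof -
  obtain v w where c: "c = cmod (braket w P v)" and v: "unit_vec_c (n * m) v" and w: "unit_vec_c (n * m) w"
    using c unfolding S_values_def by blast
  then have "c \<le> max (vec_sq_norm (n * m) (P *\<^sub>v v)) (vec_sq_norm (n * m) (P *\<^sub>v w))"
    using norm_braket_orth_projection_le[OF P] unfolding unit_vec_c_iff by blast
  then show ?thesis
    using vec_sq_norm_orth_projection_le_1[OF P v] vec_sq_norm_orth_projection_le_1[OF P w] by linarith
qed

lemma le_S_norm_orth_projection:
  "orth_projection (n * m) P \<Longrightarrow> c \<in> S_values n m k P \<Longrightarrow> c \<le> S_norm n m k P"
  unfolding S_norm_eq_Sup by (rule cSup_upper) (auto intro: bdd_aboveI S_values_orth_projection_le_1)

lemma gap_ratio_le_1: "1 \<le> h \<Longrightarrow> k \<le> m \<Longrightarrow> real (k - h) / real (m - 1) \<le> 1"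
  by (auto simp: divide_le_eq_1)

lemma orth_projection_diagonal_le_S_norm:
  assumes hk: "1 \<le> h" "h \<le> k" "k \<le> m"
    and P: "orth_projection (n * m) P" "P \<noteq> 0\<^sub>m (n * m) (n * m)"
    and y: "unit_vec_c (n * m) y" "schmidt_rank n m y \<le> h"
  defines "\<tau> \<equiv> real (k - h) / real (m - 1)"
  shows "(1 - \<tau>) * vec_sq_norm (n * m) (P *\<^sub>v y) + \<tau> \<le> S_norm n m k P"
proof -
  have \<tau>: "\<tau> \<le> 1" unfolding \<tau>_def using hk by (intro gap_ratio_le_1) auto
  obtain x where x: "unit_vec_c (n * m) x" "P *\<^sub>v x = x"
    and xy: "vec_sq_norm (n * m) (P *\<^sub>v y) \<le> (cmod (vec_inner (n * m) x y))\<^sup>2"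
    using exists_fixed_unit_vec_overlap_ge[OF P y(1)] by blast
  define a where "a = (cmod (vec_inner (n * m) x y))\<^sup>2"
  obtain z where z: "unit_vec_c (n * m) z" "schmidt_rank n m z \<le> k"
    and xz: "a + \<tau> * (1 - a) \<le> (cmod (vec_inner (n * m) x z))\<^sup>2"
    using exists_schmidt_rank_le_overlap_ge[OF hk x(1) y] unfolding a_def \<tau>_def by blast
  have xc: "x \<in> carrier_vec (n * m)" and zc: "z \<in> carrier_vec (n * m)"
    using x z unfolding unit_vec_c_iff by auto
  have "vec_inner (n * m) x z = vec_inner (n * m) x (P *\<^sub>v z)"
    using orth_projection_vec_inner[OF P(1) xc zc] x(2) by simp
  then have "(cmod (vec_inner (n * m) x z))\<^sup>2 \<le> vec_sq_norm (n * m) x * vec_sq_norm (n * m) (P *\<^sub>v z)"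
    by (simp add: cauchy_schwarz_inner_on)
  also have "\<dots> = cmod (braket z P z)"
    using x norm_braket_orth_projection_self[OF P(1) zc] unfolding unit_vec_c_iff by simp
  also have "\<dots> \<le> S_norm n m k P"
    by (intro le_S_norm_orth_projection[OF P(1)] norm_braket_in_S_values z)
  finally have "a + \<tau> * (1 - a) \<le> S_norm n m k P" using xz by linarith
  moreover have "(1 - \<tau>) * vec_sq_norm (n * m) (P *\<^sub>v y) \<le> (1 - \<tau>) * a"
    using xy \<tau> unfolding a_def by (intro mult_left_mono) auto
  ultimately show ?thesis by (simp add: algebra_simps)
qed

lemma S_value_le_S_norm:
  assumes hk: "1 \<le> h" "h \<le> k" "k \<le> m"
    and P: "orth_projection (n * m) P" "P \<noteq> 0\<^sub>m (n * m) (n * m)"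
    and c: "c \<in> S_values n m h P"
  defines "\<tau> \<equiv> real (k - h) / real (m - 1)"
  shows "(1 - \<tau>) * c + \<tau> \<le> S_norm n m k P"
proof -
  obtain v w where c: "c = cmod (braket w P v)"
    and v: "unit_vec_c (n * m) v" "schmidt_rank n m v \<le> h"
    and w: "unit_vec_c (n * m) w" "schmidt_rank n m w \<le> h"
    using c unfolding S_values_def by blast
  have "c \<le> max (vec_sq_norm (n * m) (P *\<^sub>v v)) (vec_sq_norm (n * m) (P *\<^sub>v w))"
    using norm_braket_orth_projection_le[OF P(1)] v w unfolding c unit_vec_c_iff by blast
  then obtain y where y: "unit_vec_c (n * m) y" "schmidt_rank n m y \<le> h"
    and cy: "c \<le> vec_sq_norm (n * m) (P *\<^sub>v y)"
    using v w by (auto simp: le_max_iff_disj)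
  have "\<tau> \<le> 1" unfolding \<tau>_def using hk by (intro gap_ratio_le_1) auto
  then have "(1 - \<tau>) * c \<le> (1 - \<tau>) * vec_sq_norm (n * m) (P *\<^sub>v y)"
    using cy by (intro mult_left_mono) auto
  then show ?thesis
    using orth_projection_diagonal_le_S_norm[OF hk P y] unfolding \<tau>_def by linarith
qed

lemma Sup_affine_le:
  fixes S :: "real set"
  assumes "S \<noteq> {}" "t \<le> 1" "\<And>c. c \<in> S \<Longrightarrow> (1 - t) * c + t \<le> B"
  shows "(1 - t) * Sup S + t \<le> B"
proof (cases "t = 1")
  case True
  then show ?thesis using assms(1,3) by force
next
  case False
  then have t: "0 < 1 - t" using assms(2) by simp
  have "c \<le> (B - t) / (1 - t)" if "c \<in> S" for c
    using assms(3)[OF that] t by (simp add: pos_le_divide_eq algebra_simps)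
  then have "Sup S \<le> (B - t) / (1 - t)" using assms(1) by (intro cSup_least) auto
  then show ?thesis using t by (simp add: pos_le_divide_eq mult.commute)
qed

theorem corollary4p16:
  fixes n m h k :: nat and P :: "complex mat"
  assumes "2 \<le> m" "m \<le> n" "1 \<le> h" "h \<le> k" "k \<le> m"
    and "orth_projection (n*m) P" and "P \<noteq> 0\<^sub>m (n*m) (n*m)"
  shows "S_norm n m k P \<ge>
    (1 - real (k - h) / real (m - 1)) * S_norm n m h P + real (k - h) / real (m - 1)"
proof -
  have "S_values n m h P \<noteq> {}" using assms by (intro S_values_nonempty) auto
  moreover have "real (k - h) / real (m - 1) \<le> 1" using assms by (intro gap_ratio_le_1) auto
  ultimately show ?thesis
    unfolding S_norm_eq_Sup[of n m h]
    using S_value_le_S_norm[OF assms(3-7)] by (intro Sup_affine_le)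
qed

end
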